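(* Suppose the real random variable $X$ has a log-concave density $f$ (and $\mathbf P(X>0)>0$, $\mathbf P(X<0)>0$). Let $\zeta:=P-N+1$, where $P$ and $N$ are independent, $P$ has the law of $X$ conditioned on $\{X>0\}$ and $N$ has the law of $X$ conditioned on $\{X<0\}$. Then $\zeta$ takes values in $[1,\infty)$ and for all $\theta\ge0$, \[(X-\theta)\mid\{X>\theta\}\ \le_{lr}\ \zeta,\qquad -(X+\theta)\mid\{X<-\theta\}\ \le_{lr}\ \zeta.\]
   Context: A density $f$ is log-concave if $f(\theta x+(1-\theta)y)\ge f(x)^\theta f(y)^{1-\theta}$ for all $x,y\in\mathbb R$, $\theta\in[0,1]$. For real random variables $U,W$, $U\le_{lr}W$ (likelihood ratio order) means $\mathbf P(U\in A)\mathbf P(W\in B)\ge\mathbf P(U\in B)\mathbf P(W\in A)$ for all measurable $A,B\subset\mathbb R$ with $\sup A\le\inf B$; with densities this reads $f_U(u)f_W(w)\ge f_U(w)f_W(u)$ for all $u\le w$. *)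

theory Defs
  imports "HOL-Probability.Probability"
begin

definition log_concave :: "(real \<Rightarrow> real) \<Rightarrow> bool" where
  "log_concave f \<longleftrightarrow> (\<forall>x y \<theta>. 0 \<le> \<theta> \<and> \<theta> \<le> 1 \<longrightarrow>
      f (\<theta> * x + (1 - \<theta>) * y) \<ge> f x powr \<theta> * f y powr (1 - \<theta>))"

definition lr_le :: "real measure \<Rightarrow> real measure \<Rightarrow> bool" where
  "lr_le U W \<longleftrightarrow> (\<forall>A \<in> sets borel. \<forall>B \<in> sets borel.
      (\<forall>a\<in>A. \<forall>b\<in>B. a \<le> b) \<longrightarrow>
      measure U A * measure W B \<ge> measure U B * measure W A)"

definition cond_law :: "'a measure \<Rightarrow> ('a \<Rightarrow> real) \<Rightarrow> 'a set \<Rightarrow> real measure" where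
  "cond_law M Y E = distr (uniform_measure M E) borel Y"

definition zeta_law :: "'a measure \<Rightarrow> ('a \<Rightarrow> real) \<Rightarrow> real measure" where
  "zeta_law M X = distr
     (cond_law M X {\<omega> \<in> space M. X \<omega> > 0} \<Otimes>\<^sub>M cond_law M X {\<omega> \<in> space M. X \<omega> < 0})
     borel (\<lambda>(p, n). p - n + 1)"

end

theory Submission
  imports Defs
begin

text \<open>
  All laws involved have densities: \<open>X - \<theta>\<close> given \<open>X > \<theta>\<close> has density proportional to
  \<open>f (y + \<theta>)\<close> on \<open>y > 0\<close>, and \<open>\<zeta> = P - N + 1\<close> has density proportional to
  \<open>\<integral> f n f (z + n - 1) dn\<close> over \<open>n < 0 < z + n - 1\<close>, which vanishes for \<open>z \<le> 1\<close>.
  The likelihood ratio order thus reduces to the cross inequality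
  \<open>f (b + \<theta>) \<zeta>(a) \<le> f (a + \<theta>) \<zeta>(b)\<close> for \<open>0 < a \<le> b\<close>, which holds pointwise in \<open>n\<close>:
  for log-concave \<open>f\<close> the ratio \<open>f (x + d) / f x\<close> is nonincreasing in \<open>x\<close>, and
  \<open>a + n - 1 \<le> a + \<theta>\<close>. The lower tail is the upper tail of \<open>-X\<close>, whose density \<open>f (- x)\<close> is
  again log-concave and gives the same law of \<open>\<zeta>\<close>.
\<close>

lemma log_concave_mult_shift_le:
  fixes f :: "real \<Rightarrow> real"
  assumes lc: "log_concave f" and nn: "\<And>x. f x \<ge> 0" and "x \<le> y" and "d \<ge> 0"
  shows "f x * f (y + d) \<le> f (x + d) * f y"
proof (cases "x = y \<or> d = 0 \<or> f x = 0 \<or> f (y + d) = 0")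
  case True
  then show ?thesis using nn[of "x + d"] nn[of y] by (auto simp: mult.commute)
next
  case False
  then have "x < y" "d > 0" and fx: "f x > 0" and fy: "f (y + d) > 0"
    using assms nn[of x] nn[of "y + d"] by (auto simp: order.strict_iff_order)
  define l where "l = d / (y - x + d)"
  have l: "0 \<le> l" "l \<le> 1" and ld: "l * (y - x + d) = d"
    using \<open>x < y\<close> \<open>d > 0\<close> by (auto simp: l_def field_simps)
  \<comment> \<open>both x + d and y are convex combinations of x and y + d, with swapped weights\<close>
  have "l * (y + d) + (1 - l) * x = x + d" "l * x + (1 - l) * (y + d) = y"
    using ld by (simp_all add: algebra_simps)
  then have h1: "f (x + d) \<ge> f (y + d) powr l * f x powr (1 - l)"
    and h2: "f y \<ge> f x powr l * f (y + d) powr (1 - l)"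
    using lc l unfolding log_concave_def by metis+
  have "f x * f (y + d) = (f x powr l * f x powr (1 - l)) * (f (y + d) powr l * f (y + d) powr (1 - l))"
    using fx fy by (simp add: powr_add[symmetric])
  also have "\<dots> = (f (y + d) powr l * f x powr (1 - l)) * (f x powr l * f (y + d) powr (1 - l))"
    by (simp add: ac_simps)
  also have "\<dots> \<le> f (x + d) * f y"
    using h1 h2 nn by (intro mult_mono) auto
  finally show ?thesis .
qed

lemma log_concave_reflect:
  assumes "log_concave f"
  shows "log_concave (\<lambda>x. f (- x))"
  unfolding log_concave_def
proof (intro allI impI)
  fix x y t :: real assume "0 \<le> t \<and> t \<le> 1"
  then have "f (t * (- x) + (1 - t) * (- y)) \<ge> f (- x) powr t * f (- y) powr (1 - t)"
    using assms unfolding log_concave_def by blast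
  then show "f (- x) powr t * f (- y) powr (1 - t) \<le> f (- (t * x + (1 - t) * y))"
    by (simp add: algebra_simps)
qed

lemma borel_measurable_distributed_real_density:
  assumes "distributed M lborel X (\<lambda>x. ennreal (f x))" and "\<And>x. f x \<ge> 0"
  shows "f \<in> borel_measurable borel"
proof -
  have "(\<lambda>x. ennreal (f x)) \<in> borel_measurable borel"
    using assms(1) by (simp add: distributed_def)
  then have "(\<lambda>x. enn2real (ennreal (f x))) \<in> borel_measurable borel"
    by measurable
  then show ?thesis by (simp add: assms(2))
qed

lemma prob_space_cond_law:
  assumes "prob_space M" and [measurable]: "Y \<in> borel_measurable M" "E \<in> sets M"
    and "emeasure M E \<noteq> 0"
  shows "prob_space (cond_law M Y E)"
proof -
  interpret M: prob_space M by fact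
  interpret U: prob_space "uniform_measure M E"
    by (rule prob_space_uniform_measure) (simp_all add: assms(4))
  show ?thesis
    unfolding cond_law_def
    by (rule U.prob_space_distr, subst measurable_cong_sets[OF sets_uniform_measure refl]) measurable
qed

lemma emeasure_cond_law_distributed:
  assumes D: "distributed M lborel X (\<lambda>x. ennreal (f x))"
    and [measurable]: "S \<in> sets borel" "T \<in> borel_measurable borel" "C \<in> sets borel"
  shows "emeasure (cond_law M (\<lambda>\<omega>. T (X \<omega>)) {\<omega> \<in> space M. X \<omega> \<in> S}) C
    = (\<integral>\<^sup>+x. ennreal (f x) * indicator S x * indicator C (T x) \<partial>lborel) / emeasure M {\<omega> \<in> space M. X \<omega> \<in> S}"
proof -
  have [measurable]: "X \<in> borel_measurable M"
    using D by (simp add: distributed_def)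
  define E where "E = {\<omega> \<in> space M. X \<omega> \<in> S}"
  have [measurable]: "E \<in> sets M" unfolding E_def by measurable
  have "(\<lambda>\<omega>. T (X \<omega>)) \<in> borel_measurable (uniform_measure M E)"
    by (subst measurable_cong_sets[OF sets_uniform_measure refl]) measurable
  then have "emeasure (cond_law M (\<lambda>\<omega>. T (X \<omega>)) E) C = (\<integral>\<^sup>+\<omega>. indicator C (T (X \<omega>)) \<partial>uniform_measure M E)"
    unfolding cond_law_def by (simp flip: nn_integral_indicator add: nn_integral_distr)
  also have "\<dots> = (\<integral>\<^sup>+\<omega>. indicator C (T (X \<omega>)) * indicator E \<omega> \<partial>M) / emeasure M E"
    by (rule nn_integral_uniform_measure) measurable
  also have "(\<integral>\<^sup>+\<omega>. indicator C (T (X \<omega>)) * indicator E \<omega> \<partial>M) = (\<integral>\<^sup>+\<omega>. indicator S (X \<omega>) * indicator C (T (X \<omega>)) \<partial>M)"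
    by (intro nn_integral_cong) (auto simp: E_def indicator_def)
  also have "\<dots> = (\<integral>\<^sup>+x. ennreal (f x) * indicator S x * indicator C (T x) \<partial>lborel)"
    by (subst distributed_nn_integral[OF D, symmetric]) (simp_all add: ac_simps)
  finally show ?thesis unfolding E_def .
qed

lemma emeasure_density_divide:
  assumes [measurable]: "g \<in> borel_measurable M" "C \<in> sets M"
  shows "emeasure (density M (\<lambda>x. g x / c)) C = (\<integral>\<^sup>+x. g x * indicator C x \<partial>M) / c"
proof -
  have "emeasure (density M (\<lambda>x. g x / c)) C = (\<integral>\<^sup>+x. g x * indicator C x * inverse c \<partial>M)"
    by (simp add: emeasure_density divide_ennreal_def ac_simps)
  also have "\<dots> = (\<integral>\<^sup>+x. g x * indicator C x \<partial>M) / c"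
    by (simp add: nn_integral_multc divide_ennreal_def)
  finally show ?thesis .
qed

lemma cond_law_eq_density:
  assumes D: "distributed M lborel X (\<lambda>x. ennreal (f x))" and [measurable]: "S \<in> sets borel"
  shows "cond_law M X {\<omega> \<in> space M. X \<omega> \<in> S}
    = density lborel (\<lambda>x. ennreal (f x) * indicator S x / emeasure M {\<omega> \<in> space M. X \<omega> \<in> S})"
proof (rule measure_eqI)
  have [measurable]: "(\<lambda>x. ennreal (f x)) \<in> borel_measurable borel"
    using D by (simp add: distributed_def)
  fix C assume "C \<in> sets (cond_law M X {\<omega> \<in> space M. X \<omega> \<in> S})"
  then have [measurable]: "C \<in> sets borel" by (simp add: cond_law_def)
  show "emeasure (cond_law M X {\<omega> \<in> space M. X \<omega> \<in> S}) C
    = emeasure (density lborel (\<lambda>x. ennreal (f x) * indicator S x / emeasure M {\<omega> \<in> space M. X \<omega> \<in> S})) C"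
    using emeasure_cond_law_distributed[OF D, of S "\<lambda>x. x" C]
    by (simp add: emeasure_density_divide ac_simps)
qed (simp add: cond_law_def)

lemma cond_law_excess_eq_density:
  assumes D: "distributed M lborel X (\<lambda>x. ennreal (f x))"
  shows "cond_law M (\<lambda>\<omega>. X \<omega> - \<theta>) {\<omega> \<in> space M. X \<omega> > \<theta>}
    = density lborel (\<lambda>y. ennreal (f (y + \<theta>)) * indicator {0<..} y / emeasure M {\<omega> \<in> space M. X \<omega> > \<theta>})"
proof (rule measure_eqI)
  have [measurable]: "(\<lambda>x. ennreal (f x)) \<in> borel_measurable borel"
    using D by (simp add: distributed_def)
  fix C assume "C \<in> sets (cond_law M (\<lambda>\<omega>. X \<omega> - \<theta>) {\<omega> \<in> space M. X \<omega> > \<theta>})"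
  then have [measurable]: "C \<in> sets borel" by (simp add: cond_law_def)
  have "(\<integral>\<^sup>+x. ennreal (f x) * indicator {\<theta><..} x * indicator C (x - \<theta>) \<partial>lborel)
      = (\<integral>\<^sup>+y. ennreal (f (y + \<theta>)) * indicator {0<..} y * indicator C y \<partial>lborel)"
    using nn_integral_real_affine[of "\<lambda>x. ennreal (f x) * indicator {\<theta><..} x * indicator C (x - \<theta>)" 1 \<theta>]
    by (simp add: indicator_def add.commute)
  then show "emeasure (cond_law M (\<lambda>\<omega>. X \<omega> - \<theta>) {\<omega> \<in> space M. X \<omega> > \<theta>}) C
    = emeasure (density lborel (\<lambda>y. ennreal (f (y + \<theta>)) * indicator {0<..} y / emeasure M {\<omega> \<in> space M. X \<omega> > \<theta>})) C"
    using emeasure_cond_law_distributed[OF D, of "{\<theta><..}" "\<lambda>x. x - \<theta>" C]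
    by (simp add: emeasure_density_divide ac_simps)
qed (simp add: cond_law_def)

lemma cond_law_lower_excess_eq_density:
  assumes D: "distributed M lborel X (\<lambda>x. ennreal (f x))"
  shows "cond_law M (\<lambda>\<omega>. - (X \<omega> + \<theta>)) {\<omega> \<in> space M. X \<omega> < - \<theta>}
    = density lborel (\<lambda>y. ennreal (f (- (y + \<theta>))) * indicator {0<..} y / emeasure M {\<omega> \<in> space M. X \<omega> < - \<theta>})"
proof (rule measure_eqI)
  have [measurable]: "(\<lambda>x. ennreal (f x)) \<in> borel_measurable borel"
    using D by (simp add: distributed_def)
  fix C assume "C \<in> sets (cond_law M (\<lambda>\<omega>. - (X \<omega> + \<theta>)) {\<omega> \<in> space M. X \<omega> < - \<theta>})"
  then have [measurable]: "C \<in> sets borel" by (simp add: cond_law_def)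
  have "(\<integral>\<^sup>+x. ennreal (f x) * indicator {..< - \<theta>} x * indicator C (- (x + \<theta>)) \<partial>lborel)
      = (\<integral>\<^sup>+y. ennreal (f (- (y + \<theta>))) * indicator {0<..} y * indicator C y \<partial>lborel)"
    using nn_integral_real_affine[of "\<lambda>x. ennreal (f x) * indicator {..< - \<theta>} x * indicator C (- (x + \<theta>))" "-1" "- \<theta>"]
    by (simp add: indicator_def algebra_simps)
  then show "emeasure (cond_law M (\<lambda>\<omega>. - (X \<omega> + \<theta>)) {\<omega> \<in> space M. X \<omega> < - \<theta>}) C
    = emeasure (density lborel (\<lambda>y. ennreal (f (- (y + \<theta>))) * indicator {0<..} y / emeasure M {\<omega> \<in> space M. X \<omega> < - \<theta>})) C"
    using emeasure_cond_law_distributed[OF D, of "{..< - \<theta>}" "\<lambda>x. - (x + \<theta>)" C]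
    by (simp add: emeasure_density_divide ac_simps)
qed (simp add: cond_law_def)

lemma density_distr_shifted_difference:
  fixes g h :: "real \<Rightarrow> ennreal"
  assumes [measurable]: "g \<in> borel_measurable borel" "h \<in> borel_measurable borel"
    and "finite_measure (density lborel g)" "finite_measure (density lborel h)"
  shows "distr (density lborel g \<Otimes>\<^sub>M density lborel h) borel (\<lambda>(p, n). p - n + 1)
    = density lborel (\<lambda>z. \<integral>\<^sup>+n. g (z + n - 1) * h n \<partial>lborel)"
proof (rule measure_eqI)
  interpret G: finite_measure "density lborel g" by fact
  interpret H: finite_measure "density lborel h" by fact
  interpret pair_sigma_finite "density lborel g" "density lborel h" ..
  fix A assume "A \<in> sets (distr (density lborel g \<Otimes>\<^sub>M density lborel h) borel (\<lambda>(p, n). p - n + 1))"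
  then have [measurable]: "A \<in> sets borel" by simp
  have "emeasure (distr (density lborel g \<Otimes>\<^sub>M density lborel h) borel (\<lambda>(p, n). p - n + 1)) A
      = (\<integral>\<^sup>+p. \<integral>\<^sup>+n. indicator A (p - n + 1) \<partial>density lborel h \<partial>density lborel g)"
    by (simp add: emeasure_distr nn_integral_indicator[symmetric] nn_integral_distr
        H.nn_integral_fst[symmetric] del: nn_integral_indicator)
  also have "\<dots> = (\<integral>\<^sup>+p. \<integral>\<^sup>+n. g p * h n * indicator A (p - n + 1) \<partial>lborel \<partial>lborel)"
    by (simp add: nn_integral_density nn_integral_cmult[symmetric] ac_simps)
  also have "\<dots> = (\<integral>\<^sup>+n. \<integral>\<^sup>+p. g p * h n * indicator A (p - n + 1) \<partial>lborel \<partial>lborel)"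
    by (rule lborel_pair.Fubini'[symmetric]) simp
  also have "\<dots> = (\<integral>\<^sup>+n. \<integral>\<^sup>+z. g (z + n - 1) * h n * indicator A z \<partial>lborel \<partial>lborel)"
  proof (rule nn_integral_cong)
    fix n :: real
    show "(\<integral>\<^sup>+p. g p * h n * indicator A (p - n + 1) \<partial>lborel)
        = (\<integral>\<^sup>+z. g (z + n - 1) * h n * indicator A z \<partial>lborel)"
      using nn_integral_real_affine[of "\<lambda>p. g p * h n * indicator A (p - n + 1)" 1 "n - 1"]
      by (simp add: algebra_simps)
  qed
  also have "\<dots> = (\<integral>\<^sup>+z. \<integral>\<^sup>+n. g (z + n - 1) * h n * indicator A z \<partial>lborel \<partial>lborel)"
    by (rule lborel_pair.Fubini') simp
  also have "\<dots> = emeasure (density lborel (\<lambda>z. \<integral>\<^sup>+n. g (z + n - 1) * h n \<partial>lborel)) A"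
    by (simp add: emeasure_density nn_integral_multc)
  finally show "emeasure (distr (density lborel g \<Otimes>\<^sub>M density lborel h) borel (\<lambda>(p, n). p - n + 1)) A
      = emeasure (density lborel (\<lambda>z. \<integral>\<^sup>+n. g (z + n - 1) * h n \<partial>lborel)) A" .
qed simp

lemma nn_integral_mult_nn_integral:
  fixes u v :: "'a::euclidean_space \<Rightarrow> ennreal"
  assumes [measurable]: "u \<in> borel_measurable borel" "v \<in> borel_measurable borel"
  shows "(\<integral>\<^sup>+x. u x \<partial>lborel) * (\<integral>\<^sup>+y. v y \<partial>lborel) = (\<integral>\<^sup>+y. \<integral>\<^sup>+x. u x * v y \<partial>lborel \<partial>lborel)"
  by (simp add: nn_integral_cmult[symmetric] nn_integral_multc)

lemma lr_le_densityI:
  fixes g h :: "real \<Rightarrow> ennreal"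
  assumes [measurable]: "g \<in> borel_measurable borel" "h \<in> borel_measurable borel"
    and "finite_measure (density lborel g)" "finite_measure (density lborel h)"
    and cross: "\<And>a b. a \<le> b \<Longrightarrow> g b * h a \<le> g a * h b"
  shows "lr_le (density lborel g) (density lborel h)"
  unfolding lr_le_def
proof (intro ballI impI)
  interpret G: finite_measure "density lborel g" by fact
  interpret H: finite_measure "density lborel h" by fact
  fix A B :: "real set"
  assume [measurable]: "A \<in> sets borel" "B \<in> sets borel" and AB: "\<forall>a\<in>A. \<forall>b\<in>B. a \<le> b"
  have "emeasure (density lborel g) B * emeasure (density lborel h) A
      = (\<integral>\<^sup>+a. \<integral>\<^sup>+b. g b * indicator B b * (h a * indicator A a) \<partial>lborel \<partial>lborel)"
    by (simp add: emeasure_density nn_integral_mult_nn_integral)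
  also have "\<dots> \<le> (\<integral>\<^sup>+a. \<integral>\<^sup>+b. h b * indicator B b * (g a * indicator A a) \<partial>lborel \<partial>lborel)"
    using AB cross by (intro nn_integral_mono) (auto simp: indicator_def mult.commute)
  also have "\<dots> = emeasure (density lborel h) B * emeasure (density lborel g) A"
    by (simp add: emeasure_density nn_integral_mult_nn_integral)
  finally have "emeasure (density lborel g) B * emeasure (density lborel h) A
      \<le> emeasure (density lborel g) A * emeasure (density lborel h) B"
    by (simp add: mult.commute)
  then have "enn2real (emeasure (density lborel g) B * emeasure (density lborel h) A)
      \<le> enn2real (emeasure (density lborel g) A * emeasure (density lborel h) B)"
    by (rule enn2real_mono) (simp add: ennreal_mult_eq_top_iff less_top[symmetric])
  then show "measure (density lborel g) B * measure (density lborel h) A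
      \<le> measure (density lborel g) A * measure (density lborel h) B"
    by (simp add: measure_def enn2real_mult)
qed

definition zeta_density :: "(real \<Rightarrow> real) \<Rightarrow> real \<Rightarrow> ennreal" where
  "zeta_density f z = (\<integral>\<^sup>+n. ennreal (f (z + n - 1)) * indicator {0<..} (z + n - 1)
      * (ennreal (f n) * indicator {..<0} n) \<partial>lborel)"

lemma borel_measurable_zeta_density[measurable]:
  assumes [measurable]: "f \<in> borel_measurable borel"
  shows "zeta_density f \<in> borel_measurable borel"
  unfolding zeta_density_def by measurable

lemma zeta_density_eq_0:
  assumes "z \<le> 1"
  shows "zeta_density f z = 0"
proof -
  have "zeta_density f z = (\<integral>\<^sup>+n. 0 \<partial>(lborel :: real measure))"
    unfolding zeta_density_def using assms by (intro nn_integral_cong) (auto simp: indicator_def)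
  then show ?thesis by simp
qed

lemma zeta_density_reflect:
  assumes [measurable]: "f \<in> borel_measurable borel"
  shows "zeta_density (\<lambda>x. f (- x)) = zeta_density f"
proof
  fix z
  show "zeta_density (\<lambda>x. f (- x)) z = zeta_density f z"
    unfolding zeta_density_def
    using nn_integral_real_affine[of "\<lambda>n. ennreal (f (- (z + n - 1))) * indicator {0<..} (z + n - 1) * (ennreal (f (- n)) * indicator {..<0} n)" "-1" "1 - z"]
    by (simp add: indicator_def algebra_simps)
qed

lemma zeta_density_cross_le:
  fixes f :: "real \<Rightarrow> real"
  assumes lc: "log_concave f" and nn: "\<And>x. f x \<ge> 0" and [measurable]: "f \<in> borel_measurable borel"
    and "\<theta> \<ge> 0" and "a \<le> b"
  shows "ennreal (f (b + \<theta>)) * indicator {0<..} b * zeta_density f a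
    \<le> ennreal (f (a + \<theta>)) * indicator {0<..} a * zeta_density f b"
proof (cases "a > 0")
  case False
  then show ?thesis by (simp add: zeta_density_eq_0)
next
  case True
  have "ennreal (f (b + \<theta>)) * (ennreal (f (a + n - 1)) * indicator {0<..} (a + n - 1) * (ennreal (f n) * indicator {..<0} n))
     \<le> ennreal (f (a + \<theta>)) * (ennreal (f (b + n - 1)) * indicator {0<..} (b + n - 1) * (ennreal (f n) * indicator {..<0} n))"
    for n
  proof (cases "n < 0 \<and> a + n - 1 > 0")
    case False
    then show ?thesis by (auto simp: indicator_def)
  next
    case n: True
    have "f (a + n - 1) * f (a + \<theta> + (b - a)) \<le> f (a + n - 1 + (b - a)) * f (a + \<theta>)"
      by (rule log_concave_mult_shift_le[OF lc nn]) (use n assms in auto)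
    then have "f (b + \<theta>) * f (a + n - 1) * f n \<le> f (a + \<theta>) * f (b + n - 1) * f n"
      using nn[of n] by (intro mult_right_mono) (simp_all add: algebra_simps)
    then show ?thesis
      using n assms nn by (simp add: indicator_def ennreal_mult[symmetric] ennreal_leI mult.assoc)
  qed
  then have "ennreal (f (b + \<theta>)) * zeta_density f a \<le> ennreal (f (a + \<theta>)) * zeta_density f b"
    unfolding zeta_density_def by (simp add: nn_integral_cmult[symmetric] nn_integral_mono)
  then show ?thesis
    using True assms by simp
qed

lemma prob_space_zeta_law:
  assumes "prob_space M" and [measurable]: "X \<in> borel_measurable M"
    and "emeasure M {\<omega> \<in> space M. X \<omega> > 0} \<noteq> 0" "emeasure M {\<omega> \<in> space M. X \<omega> < 0} \<noteq> 0"
  shows "prob_space (zeta_law M X)"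
proof -
  let ?P = "cond_law M X {\<omega> \<in> space M. X \<omega> > 0}" and ?N = "cond_law M X {\<omega> \<in> space M. X \<omega> < 0}"
  have "prob_space ?P" "prob_space ?N"
    using assms by (auto intro!: prob_space_cond_law)
  have [measurable_cong]: "sets ?P = sets borel" "sets ?N = sets borel"
    by (simp_all add: cond_law_def)
  have "(\<lambda>(p, n). p - n + 1 :: real) \<in> borel_measurable (?P \<Otimes>\<^sub>M ?N)"
    by measurable
  then show ?thesis
    unfolding zeta_law_def
    using prob_space_pair[OF \<open>prob_space ?P\<close> \<open>prob_space ?N\<close>] by (rule prob_space.prob_space_distr[rotated])
qed

lemma zeta_law_eq_density:
  assumes "prob_space M" and D: "distributed M lborel X (\<lambda>x. ennreal (f x))" and nn: "\<And>x. f x \<ge> 0"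
    and "emeasure M {\<omega> \<in> space M. X \<omega> > 0} \<noteq> 0" "emeasure M {\<omega> \<in> space M. X \<omega> < 0} \<noteq> 0"
  shows "zeta_law M X = density lborel (\<lambda>z. zeta_density f z
    / emeasure M {\<omega> \<in> space M. X \<omega> > 0} / emeasure M {\<omega> \<in> space M. X \<omega> < 0})"
proof -
  have [measurable]: "X \<in> borel_measurable M" "f \<in> borel_measurable borel"
    using D nn by (auto simp: distributed_def intro: borel_measurable_distributed_real_density)
  define cp where "cp = emeasure M {\<omega> \<in> space M. X \<omega> > 0}"
  define cn where "cn = emeasure M {\<omega> \<in> space M. X \<omega> < 0}"
  have P: "cond_law M X {\<omega> \<in> space M. X \<omega> > 0} = density lborel (\<lambda>x. ennreal (f x) * indicator {0<..} x / cp)"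
    using cond_law_eq_density[OF D, of "{0<..}"] by (simp add: cp_def)
  have N: "cond_law M X {\<omega> \<in> space M. X \<omega> < 0} = density lborel (\<lambda>x. ennreal (f x) * indicator {..<0} x / cn)"
    using cond_law_eq_density[OF D, of "{..<0}"] by (simp add: cn_def)
  have "prob_space (cond_law M X {\<omega> \<in> space M. X \<omega> > 0})" "prob_space (cond_law M X {\<omega> \<in> space M. X \<omega> < 0})"
    using assms by (auto intro!: prob_space_cond_law)
  then have "finite_measure (density lborel (\<lambda>x. ennreal (f x) * indicator {0<..} x / cp))"
    "finite_measure (density lborel (\<lambda>x. ennreal (f x) * indicator {..<0} x / cn))"
    unfolding P N by (simp_all add: prob_space.finite_measure)
  then have "zeta_law M X = density lborel (\<lambda>z. \<integral>\<^sup>+n.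
      ennreal (f (z + n - 1)) * indicator {0<..} (z + n - 1) / cp * (ennreal (f n) * indicator {..<0} n / cn) \<partial>lborel)"
    unfolding zeta_law_def P N by (intro density_distr_shifted_difference) simp_all
  also have "\<dots> = density lborel (\<lambda>z. zeta_density f z / cp / cn)"
    unfolding zeta_density_def divide_ennreal_def
    by (subst nn_integral_multc[symmetric], measurable)+ (simp add: ac_simps)
  finally show ?thesis unfolding cp_def cn_def .
qed

lemma measure_zeta_law_atLeast_1:
  assumes "prob_space M" and D: "distributed M lborel X (\<lambda>x. ennreal (f x))" and nn: "\<And>x. f x \<ge> 0"
    and "emeasure M {\<omega> \<in> space M. X \<omega> > 0} \<noteq> 0" "emeasure M {\<omega> \<in> space M. X \<omega> < 0} \<noteq> 0"
  shows "measure (zeta_law M X) {1..} = 1"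
proof -
  have [measurable]: "X \<in> borel_measurable M" "f \<in> borel_measurable borel"
    using D nn by (auto simp: distributed_def intro: borel_measurable_distributed_real_density)
  interpret Z: prob_space "zeta_law M X"
    using assms by (intro prob_space_zeta_law) simp_all
  have "emeasure (zeta_law M X) {1..} = emeasure (zeta_law M X) (space (zeta_law M X))"
    unfolding zeta_law_eq_density[OF assms]
    by (simp add: emeasure_density, intro nn_integral_cong) (auto simp: indicator_def zeta_density_eq_0)
  then show ?thesis
    by (simp add: Z.emeasure_eq_measure Z.prob_space)
qed

lemma lr_le_excess_zeta_density:
  fixes f :: "real \<Rightarrow> real"
  assumes lc: "log_concave f" and nn: "\<And>x. f x \<ge> 0" and [measurable]: "f \<in> borel_measurable borel"
    and "\<theta> \<ge> 0"
    and "finite_measure (density lborel (\<lambda>y. ennreal (f (y + \<theta>)) * indicator {0<..} y / c))"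
    and "finite_measure (density lborel (\<lambda>z. zeta_density f z / cp / cn))"
  shows "lr_le (density lborel (\<lambda>y. ennreal (f (y + \<theta>)) * indicator {0<..} y / c))
    (density lborel (\<lambda>z. zeta_density f z / cp / cn))"
proof (rule lr_le_densityI)
  fix a b :: real assume "a \<le> b"
  then have "ennreal (f (b + \<theta>)) * indicator {0<..} b * zeta_density f a
      * (inverse c * inverse cp * inverse cn)
    \<le> ennreal (f (a + \<theta>)) * indicator {0<..} a * zeta_density f b
      * (inverse c * inverse cp * inverse cn)"
    using assms by (intro mult_right_mono zeta_density_cross_le) simp_all
  then show "ennreal (f (b + \<theta>)) * indicator {0<..} b / c * (zeta_density f a / cp / cn)
    \<le> ennreal (f (a + \<theta>)) * indicator {0<..} a / c * (zeta_density f b / cp / cn)"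
    by (simp add: divide_ennreal_def ac_simps)
qed (use assms in simp_all)

lemma lr_le_cond_law_excess_zeta_law:
  assumes "prob_space M" and D: "distributed M lborel X (\<lambda>x. ennreal (f x))" and nn: "\<And>x. f x \<ge> 0"
    and lc: "log_concave f" and "\<theta> \<ge> 0"
    and pos: "emeasure M {\<omega> \<in> space M. X \<omega> > 0} \<noteq> 0" "emeasure M {\<omega> \<in> space M. X \<omega> < 0} \<noteq> 0"
    and "emeasure M {\<omega> \<in> space M. X \<omega> > \<theta>} \<noteq> 0"
  shows "lr_le (cond_law M (\<lambda>\<omega>. X \<omega> - \<theta>) {\<omega> \<in> space M. X \<omega> > \<theta>}) (zeta_law M X)"
proof -
  have [measurable]: "X \<in> borel_measurable M" and fm[measurable]: "f \<in> borel_measurable borel"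
    using D nn by (auto simp: distributed_def intro: borel_measurable_distributed_real_density)
  have "prob_space (zeta_law M X)"
    using assms by (intro prob_space_zeta_law) simp_all
  moreover have "prob_space (cond_law M (\<lambda>\<omega>. X \<omega> - \<theta>) {\<omega> \<in> space M. X \<omega> > \<theta>})"
    using assms by (intro prob_space_cond_law) simp_all
  ultimately show ?thesis
    unfolding cond_law_excess_eq_density[OF D] zeta_law_eq_density[OF \<open>prob_space M\<close> D nn pos]
    by (intro lr_le_excess_zeta_density lc nn) (simp_all add: prob_space.finite_measure assms)
qed

lemma lr_le_cond_law_lower_excess_zeta_law:
  assumes "prob_space M" and D: "distributed M lborel X (\<lambda>x. ennreal (f x))" and nn: "\<And>x. f x \<ge> 0"
    and lc: "log_concave f" and "\<theta> \<ge> 0"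
    and pos: "emeasure M {\<omega> \<in> space M. X \<omega> > 0} \<noteq> 0" "emeasure M {\<omega> \<in> space M. X \<omega> < 0} \<noteq> 0"
    and "emeasure M {\<omega> \<in> space M. X \<omega> < - \<theta>} \<noteq> 0"
  shows "lr_le (cond_law M (\<lambda>\<omega>. - (X \<omega> + \<theta>)) {\<omega> \<in> space M. X \<omega> < - \<theta>}) (zeta_law M X)"
proof -
  have [measurable]: "X \<in> borel_measurable M" and fm[measurable]: "f \<in> borel_measurable borel"
    using D nn by (auto simp: distributed_def intro: borel_measurable_distributed_real_density)
  have [measurable]: "(\<lambda>x. f (- x)) \<in> borel_measurable borel"
    by measurable
  have Z: "zeta_law M X = density lborel (\<lambda>z. zeta_density (\<lambda>x. f (- x)) z
      / emeasure M {\<omega> \<in> space M. X \<omega> > 0} / emeasure M {\<omega> \<in> space M. X \<omega> < 0})"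
    unfolding zeta_law_eq_density[OF \<open>prob_space M\<close> D nn pos] zeta_density_reflect[OF fm] ..
  have "prob_space (zeta_law M X)"
    using assms by (intro prob_space_zeta_law) simp_all
  moreover have "prob_space (cond_law M (\<lambda>\<omega>. - (X \<omega> + \<theta>)) {\<omega> \<in> space M. X \<omega> < - \<theta>})"
    using assms by (intro prob_space_cond_law) simp_all
  ultimately show ?thesis
    unfolding cond_law_lower_excess_eq_density[OF D] Z
    by (intro lr_le_excess_zeta_density[where f="\<lambda>x. f (- x)"] log_concave_reflect lc)
      (simp_all add: prob_space.finite_measure assms)
qed

theorem lemma3p1:
  fixes M :: "'a measure" and X :: "'a \<Rightarrow> real" and f :: "real \<Rightarrow> real"
  assumes "prob_space M"
    and "X \<in> borel_measurable M"
    and "\<And>x. f x \<ge> 0"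
    and "distributed M lborel X (\<lambda>x. ennreal (f x))"
    and "log_concave f"
    and "measure M {\<omega> \<in> space M. X \<omega> > 0} > 0"
    and "measure M {\<omega> \<in> space M. X \<omega> < 0} > 0"
  shows "measure (zeta_law M X) {1..} = 1
    \<and> (\<forall>\<theta>::real. \<theta> \<ge> 0 \<longrightarrow>
        (measure M {\<omega> \<in> space M. X \<omega> > \<theta>} > 0 \<longrightarrow>
           lr_le (cond_law M (\<lambda>\<omega>. X \<omega> - \<theta>) {\<omega> \<in> space M. X \<omega> > \<theta>}) (zeta_law M X))
      \<and> (measure M {\<omega> \<in> space M. X \<omega> < - \<theta>} > 0 \<longrightarrow>
           lr_le (cond_law M (\<lambda>\<omega>. - (X \<omega> + \<theta>)) {\<omega> \<in> space M. X \<omega> < - \<theta>}) (zeta_law M X)))"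
proof -
  interpret M: prob_space M by fact
  have pos: "emeasure M E \<noteq> 0" if "measure M E > 0" for E
    using that by (simp add: M.emeasure_eq_measure)
  note pos_sign = assms(6,7)[THEN pos]
  show ?thesis
    using measure_zeta_law_atLeast_1[OF assms(1,4,3) pos_sign]
      lr_le_cond_law_excess_zeta_law[OF assms(1,4,3,5) _ pos_sign, OF _ pos]
      lr_le_cond_law_lower_excess_zeta_law[OF assms(1,4,3,5) _ pos_sign, OF _ pos]
    by blast
qed

end
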